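(* Let $\ell\ge 6$ and $w\ge 0$ be integers, let $A=\langle A_1,\dots,A_\ell\rangle$ and $B=\langle B_1,\dots,B_\ell\rangle$ be real sequences, and let $\delta:\mathbb{R}\times\mathbb{R}\to[0,\infty)$ be a symmetric pairwise cost function with $\delta(a,a)=0$ for all $a$. Suppose that for all reals $a,b,x,y$ with $a\le x\le y\le b$ or $a\ge x\ge y\ge b$ we have $\delta(a,b)\ge \delta(a,y)+\delta(b,x)-\delta(x,y)$. Define $$\mathrm{LB\_Webb}_w(A,B)=\mathrm{minlrpaths}(A,B)+\sum_{i=4}^{\ell-3}\kappa_i+\sum_{i=4}^{\ell-3}\gamma_i,$$ where $\kappa_i=\delta(A_i,\mathbb{U}^B_i)$ if $A_i>\mathbb{U}^B_i$, $\kappa_i=\delta(A_i,\mathbb{L}^B_i)$ if $A_i<\mathbb{L}^B_i$, and $\kappa_i=0$ otherwise; and $\gamma_i$ is given by the first applicable case among: (1) $\delta(B_i,\mathbb{U}^A_i)$ if $\mathrm{freeAbove}(i)$ and $B_i>\mathbb{U}^A_i$; (2) $\delta(B_i,\mathbb{L}^A_i)$ if $\mathrm{freeBelow}(i)$ and $B_i<\mathbb{L}^A_i$; (3) $\delta(B_i,\mathbb{U}^A_i)-\delta(\mathbb{U}^{\mathbb{L}^B}_i,\mathbb{U}^A_i)$ if not $\mathrm{freeAbove}(i)$ and $B_i>\mathbb{U}^{\mathbb{L}^B}_i>\mathbb{U}^A_i$; (4) $\delta(B_i,\mathbb{L}^A_i)-\delta(\mathbb{L}^{\mathbb{U}^B}_i,\mathbb{L}^A_i)$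 if not $\mathrm{freeBelow}(i)$ and $B_i<\mathbb{L}^{\mathbb{U}^B}_i<\mathbb{L}^A_i$; (5) $0$ otherwise. Then $\mathrm{LB\_Webb}_w(A,B)\le\mathrm{DTW}_w(A,B)$.
   Context: A warping path of $A$ and $B$ is a sequence of pairs $(i_1,j_1),\dots,(i_P,j_P)$ with $(i_1,j_1)=(1,1)$, $(i_P,j_P)=(\ell,\ell)$, and for each $1<k\le P$, $(i_{k-1},j_{k-1})\in\{(i_k-1,j_k),(i_k,j_k-1),(i_k-1,j_k-1)\}$. $\mathrm{DTW}_w(A,B)$ is the minimum of $\sum_{k=1}^P\delta(A_{i_k},B_{j_k})$ over all warping paths all of whose pairs satisfy $i_k-w\le j_k\le i_k+w$. For a real sequence $S$ of length $\ell$, its upper and lower envelopes with window $w$ are $\mathbb{U}^S_i=\max_{\max(1,i-w)\le j\le\min(\ell,i+w)}S_j$ and $\mathbb{L}^S_i=\min_{\max(1,i-w)\le j\le\min(\ell,i+w)}S_j$. $\mathbb{U}^{\mathbb{L}^B}$ is the upper envelope of the lower envelope of $B$, $\mathbb{L}^{\mathbb{U}^B}$ the lower envelope of the upper envelope of $B$, $\mathbb{L}^{\mathbb{U}^A}$ the lower envelope of the upper envelope of $A$, and $\mathbb{U}^{\mathbb{L}^A}$ the upper envelope of the lower envelope of $A$ (all with window $w$). $\mathrm{freeAbove}(j)$ holds iff for every $i$ with $4\le i\le\ell-3$ and $j-w\le i\le j+w$: $\mathbb{L}^B_i\le A_i\le\mathbb{U}^B_i$, or $A_i<\mathbb{L}^B_i\le\mathbb{L}^{\mathbb{U}^A}_i$.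 $\mathrm{freeBelow}(j)$ holds iff for every $i$ with $4\le i\le\ell-3$ and $j-w\le i\le j+w$: $\mathbb{L}^B_i\le A_i\le\mathbb{U}^B_i$, or $A_i>\mathbb{U}^B_i\ge\mathbb{U}^{\mathbb{L}^A}_i$. Writing $\delta_{i,j}=\delta(A_i,B_j)$, $\mathrm{minlrpaths}(A,B)=\delta_{1,1}+\delta_{\ell,\ell}+\min[\delta_{1,2}+\delta_{1,3},\ \delta_{1,2}+\delta_{2,3},\ \delta_{2,2}+\delta_{2,3},\ \delta_{2,2}+\delta_{3,3},\ \delta_{2,2}+\delta_{3,2},\ \delta_{2,1}+\delta_{3,2},\ \delta_{2,1}+\delta_{3,1}]+\min[\delta_{\ell,\ell-1}+\delta_{\ell,\ell-2},\ \delta_{\ell,\ell-1}+\delta_{\ell-1,\ell-2},\ \delta_{\ell-1,\ell-1}+\delta_{\ell-1,\ell-2},\ \delta_{\ell-1,\ell-1}+\delta_{\ell-2,\ell-2},\ \delta_{\ell-1,\ell-1}+\delta_{\ell-2,\ell-1},\ \delta_{\ell-1,\ell}+\delta_{\ell-2,\ell-1},\ \delta_{\ell-1,\ell}+\delta_{\ell-2,\ell}]$. *)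

theory Defs
  imports Complex_Main
begin

text \<open>Sequences of length l are functions nat => real, meaningful on indices 1..l.\<close>

definition warping_path :: "nat \<Rightarrow> (nat \<times> nat) list \<Rightarrow> bool" where
  "warping_path l ps \<longleftrightarrow> ps \<noteq> [] \<and> hd ps = (1,1) \<and> last ps = (l,l) \<and>
     (\<forall>k. 0 < k \<and> k < length ps \<longrightarrow>
        (let (a,b) = ps ! (k-1) in ps ! k \<in> {(a+1,b), (a,b+1), (a+1,b+1)}))"

definition in_band :: "nat \<Rightarrow> (nat \<times> nat) list \<Rightarrow> bool" where
  "in_band w ps \<longleftrightarrow> (\<forall>(i,j)\<in>set ps. j \<le> i + w \<and> i \<le> j + w)"

definition path_cost :: "(real \<Rightarrow> real \<Rightarrow> real) \<Rightarrow> (nat \<Rightarrow> real) \<Rightarrow> (nat \<Rightarrow> real)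
    \<Rightarrow> (nat \<times> nat) list \<Rightarrow> real" where
  "path_cost \<delta> A B ps = sum_list (map (\<lambda>(i,j). \<delta> (A i) (B j)) ps)"

definition DTW :: "(real \<Rightarrow> real \<Rightarrow> real) \<Rightarrow> nat \<Rightarrow> nat \<Rightarrow> (nat \<Rightarrow> real) \<Rightarrow> (nat \<Rightarrow> real) \<Rightarrow> real" where
  "DTW \<delta> l w A B = Min {path_cost \<delta> A B ps | ps. warping_path l ps \<and> in_band w ps}"

definition upper_env :: "nat \<Rightarrow> nat \<Rightarrow> (nat \<Rightarrow> real) \<Rightarrow> nat \<Rightarrow> real" where
  "upper_env l w S i = Max {S j | j. max 1 (i - w) \<le> j \<and> j \<le> min l (i + w)}"

definition lower_env :: "nat \<Rightarrow> nat \<Rightarrow> (nat \<Rightarrow> real) \<Rightarrow> nat \<Rightarrow> real" where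
  "lower_env l w S i = Min {S j | j. max 1 (i - w) \<le> j \<and> j \<le> min l (i + w)}"

definition freeAbove :: "nat \<Rightarrow> nat \<Rightarrow> (nat \<Rightarrow> real) \<Rightarrow> (nat \<Rightarrow> real) \<Rightarrow> nat \<Rightarrow> bool" where
  "freeAbove l w A B j \<longleftrightarrow> (\<forall>i. 4 \<le> i \<and> i + 3 \<le> l \<and> j \<le> i + w \<and> i \<le> j + w \<longrightarrow>
     (lower_env l w B i \<le> A i \<and> A i \<le> upper_env l w B i) \<or>
     (A i < lower_env l w B i \<and> lower_env l w B i \<le> lower_env l w (upper_env l w A) i))"

definition freeBelow :: "nat \<Rightarrow> nat \<Rightarrow> (nat \<Rightarrow> real) \<Rightarrow> (nat \<Rightarrow> real) \<Rightarrow> nat \<Rightarrow> bool" where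
  "freeBelow l w A B j \<longleftrightarrow> (\<forall>i. 4 \<le> i \<and> i + 3 \<le> l \<and> j \<le> i + w \<and> i \<le> j + w \<longrightarrow>
     (lower_env l w B i \<le> A i \<and> A i \<le> upper_env l w B i) \<or>
     (A i > upper_env l w B i \<and> upper_env l w B i \<ge> upper_env l w (lower_env l w A) i))"

definition minlrpaths :: "(real \<Rightarrow> real \<Rightarrow> real) \<Rightarrow> nat \<Rightarrow> (nat \<Rightarrow> real) \<Rightarrow> (nat \<Rightarrow> real) \<Rightarrow> real" where
  "minlrpaths \<delta> l A B =
    (let d = (\<lambda>i j. \<delta> (A i) (B j)) in
     d 1 1 + d l l
     + Min {d 1 2 + d 1 3, d 1 2 + d 2 3, d 2 2 + d 2 3, d 2 2 + d 3 3,
            d 2 2 + d 3 2, d 2 1 + d 3 2, d 2 1 + d 3 1}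
     + Min {d l (l-1) + d l (l-2), d l (l-1) + d (l-1) (l-2),
            d (l-1) (l-1) + d (l-1) (l-2), d (l-1) (l-1) + d (l-2) (l-2),
            d (l-1) (l-1) + d (l-2) (l-1), d (l-1) l + d (l-2) (l-1),
            d (l-1) l + d (l-2) l})"

definition kappa :: "(real \<Rightarrow> real \<Rightarrow> real) \<Rightarrow> nat \<Rightarrow> nat \<Rightarrow> (nat \<Rightarrow> real) \<Rightarrow> (nat \<Rightarrow> real) \<Rightarrow> nat \<Rightarrow> real" where
  "kappa \<delta> l w A B i =
    (if A i > upper_env l w B i then \<delta> (A i) (upper_env l w B i)
     else if A i < lower_env l w B i then \<delta> (A i) (lower_env l w B i)
     else 0)"

definition gamma :: "(real \<Rightarrow> real \<Rightarrow> real) \<Rightarrow> nat \<Rightarrow> nat \<Rightarrow> (nat \<Rightarrow> real) \<Rightarrow> (nat \<Rightarrow> real) \<Rightarrow> nat \<Rightarrow> real" where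
  "gamma \<delta> l w A B i =
    (let UA = upper_env l w A i; LA = lower_env l w A i;
         ULB = upper_env l w (lower_env l w B) i; LUB = lower_env l w (upper_env l w B) i in
     if freeAbove l w A B i \<and> B i > UA then \<delta> (B i) UA
     else if freeBelow l w A B i \<and> B i < LA then \<delta> (B i) LA
     else if \<not> freeAbove l w A B i \<and> B i > ULB \<and> ULB > UA then \<delta> (B i) UA - \<delta> ULB UA
     else if \<not> freeBelow l w A B i \<and> B i < LUB \<and> LUB < LA then \<delta> (B i) LA - \<delta> LUB LA
     else 0)"

definition LB_Webb :: "(real \<Rightarrow> real \<Rightarrow> real) \<Rightarrow> nat \<Rightarrow> nat \<Rightarrow> (nat \<Rightarrow> real) \<Rightarrow> (nat \<Rightarrow> real) \<Rightarrow> real" where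
  "LB_Webb \<delta> l w A B = minlrpaths \<delta> l A B
     + (\<Sum>i = 4..l-3. kappa \<delta> l w A B i) + (\<Sum>i = 4..l-3. gamma \<delta> l w A B i)"

end

theory Submission
  imports Defs
begin

(* Every warping path meets every row and every column, and besides (1,1) and (l,l) it visits
   two more cells in each 3x3 corner, in one of the seven configurations of minlrpaths. Charge
   kappa_i to a path cell (i, j) in row i and gamma_j to a path cell in column j. The band
   constraint puts B_j in [L^B_i, U^B_i] and A_i in [L^A_j, U^A_j], so each charge alone is at
   most delta(A_i, B_j). When both fall on the same cell, the stretches they measure (from A_i up
   to L^B_i and from U^A_j up to B_j, or the mirror situation) may overlap; freeAbove and
   freeBelow exclude this in the first two cases of gamma, and in the third and fourth the
   subtracted term pays for it, by the quadrangle inequality. For l >= 6 the corner cells and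
   the cells in middle rows or columns are pairwise distinct, so the charges add up to at most
   the cost of the path. *)

section \<open>Warping paths\<close>

fun successors :: "nat \<times> nat \<Rightarrow> (nat \<times> nat) set" where
  "successors (i, j) = {(i + 1, j), (i, j + 1), (i + 1, j + 1)}"

lemma warping_path_iff:
  "warping_path l ps \<longleftrightarrow> ps \<noteq> [] \<and> hd ps = (1, 1) \<and> last ps = (l, l) \<and>
     (\<forall>k. Suc k < length ps \<longrightarrow> ps ! Suc k \<in> successors (ps ! k))"
proof -
  have succ: "(let (a, b) = p in q \<in> {(a + 1, b), (a, b + 1), (a + 1, b + 1)}) \<longleftrightarrow> q \<in> successors p"
    for p q :: "nat \<times> nat"
    by (cases p) simp
  have "(\<forall>k. 0 < k \<and> k < length ps \<longrightarrow> ps ! k \<in> successors (ps ! (k - 1))) \<longleftrightarrow>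
        (\<forall>k. Suc k < length ps \<longrightarrow> ps ! Suc k \<in> successors (ps ! k))"
    by (metis Suc_pred diff_Suc_1 zero_less_Suc)
  then show ?thesis
    unfolding warping_path_def succ by blast
qed

lemma successors_bounds:
  assumes "q \<in> successors p"
  shows "fst p \<le> fst q" "fst q \<le> fst p + 1" "snd p \<le> snd q" "snd q \<le> snd p + 1"
    "fst p + snd p < fst q + snd q"
  using assms by (cases p; auto)+

lemma warping_path_corners: "warping_path l ps \<Longrightarrow> (1, 1) \<in> set ps \<and> (l, l) \<in> set ps"
  unfolding warping_path_iff by (metis hd_in_set last_in_set)

context
  fixes l :: nat and ps :: "(nat \<times> nat) list"
  assumes path: "warping_path l ps"
begin

lemma warping_path_nonempty: "0 < length ps"
  using path by (simp add: warping_path_iff)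

lemma warping_path_nth_Suc: "Suc k < length ps \<Longrightarrow> ps ! Suc k \<in> successors (ps ! k)"
  using path unfolding warping_path_iff by blast

lemma warping_path_nth_0: "ps ! 0 = (1, 1)"
  using path unfolding warping_path_iff by (metis hd_conv_nth)

lemma warping_path_nth_last: "ps ! (length ps - 1) = (l, l)"
  using path unfolding warping_path_iff by (metis last_conv_nth)

lemma warping_path_sorted: "sorted (map fst ps)" "sorted (map snd ps)"
  using successors_bounds(1,3)[OF warping_path_nth_Suc] by (simp_all add: sorted_iff_nth_Suc)

lemma warping_path_distinct: "distinct ps"
proof -
  have "sorted_wrt (<) (map (\<lambda>p. fst p + snd p) ps)"
    using successors_bounds(5)[OF warping_path_nth_Suc]
    by (simp add: sorted_wrt_iff_nth_Suc_transp)
  then show ?thesis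
    by (simp add: strict_sorted_iff distinct_map)
qed

lemma warping_path_cell_bounds: "p \<in> set ps \<Longrightarrow> fst p \<in> {1..l} \<and> snd p \<in> {1..l}"
proof -
  assume "p \<in> set ps"
  then obtain k where k: "k < length ps" "p = ps ! k"
    by (auto simp: in_set_conv_nth)
  have "f (ps ! 0) \<le> f p \<and> f p \<le> f (ps ! (length ps - 1))"
    if "sorted (map f ps)" for f :: "nat \<times> nat \<Rightarrow> nat"
    using sorted_nth_mono[OF that, of 0 k] sorted_nth_mono[OF that, of k "length ps - 1"]
      k warping_path_nonempty
    by simp
  from this[OF warping_path_sorted(1)] this[OF warping_path_sorted(2)] show ?thesis
    using warping_path_nth_0 warping_path_nth_last by simp
qed

lemma warping_path_length_ge: "l \<le> length ps"
proof -
  have "fst (ps ! k) \<le> Suc k" if "k < length ps" for k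
    using that
  proof (induction k)
    case 0
    then show ?case
      using warping_path_nth_0 by simp
  next
    case (Suc k)
    then show ?case
      using successors_bounds(2)[OF warping_path_nth_Suc[of k]] by simp
  qed
  from this[of "length ps - 1"] show ?thesis
    using warping_path_nonempty warping_path_nth_last by simp
qed

lemma warping_path_covers_rows: "i \<in> {1..l} \<Longrightarrow> i \<in> fst ` set ps"
proof -
  assume i: "i \<in> {1..l}"
  let ?f = "\<lambda>k. int (fst (ps ! k))"
  have "\<bar>?f (Suc k) - ?f k\<bar> \<le> 1" if "Suc k < length ps" for k
    using successors_bounds(1,2)[OF warping_path_nth_Suc[OF that]] by simp
  then obtain k where "k \<le> length ps - 1" "?f k = int i"
    using nat_intermed_int_val[of 0 "length ps - 1" ?f "int i"] i
      warping_path_nth_0 warping_path_nth_last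
    by auto
  moreover note warping_path_nonempty
  ultimately have "k < length ps" "i = fst (ps ! k)"
    by linarith+
  then show ?thesis
    by (metis nth_mem rev_image_eqI)
qed

end

lemma warping_path_transpose:
  assumes "warping_path l ps"
  shows "warping_path l (map prod.swap ps)"
proof -
  have "prod.swap q \<in> successors (prod.swap p)" if "q \<in> successors p" for p q :: "nat \<times> nat"
    using that by (cases p) auto
  then show ?thesis
    using assms by (auto simp: warping_path_iff hd_map last_map)
qed

lemma warping_path_covers_columns: "warping_path l ps \<Longrightarrow> j \<in> {1..l} \<Longrightarrow> j \<in> snd ` set ps"
  using warping_path_covers_rows[OF warping_path_transpose] by force

fun mirror :: "nat \<Rightarrow> nat \<times> nat \<Rightarrow> nat \<times> nat" where
  "mirror l (i, j) = (Suc l - i, Suc l - j)"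

lemma mirror_mirror: "fst p \<le> Suc l \<Longrightarrow> snd p \<le> Suc l \<Longrightarrow> mirror l (mirror l p) = p"
  by (cases p) simp

lemma successors_mirror:
  "q \<in> successors p \<Longrightarrow> fst q \<le> l \<Longrightarrow> snd q \<le> l \<Longrightarrow> mirror l p \<in> successors (mirror l q)"
  by (cases p) auto

lemma warping_path_mirror:
  assumes path: "warping_path l ps"
  shows "warping_path l (map (mirror l) (rev ps))"
proof -
  let ?n = "length ps"
  have "map (mirror l) (rev ps) ! Suc k \<in> successors (map (mirror l) (rev ps) ! k)"
    if "Suc k < ?n" for k
  proof -
    have "Suc (?n - Suc (Suc k)) = ?n - Suc k" "?n - Suc k < ?n"
      using that by simp_all
    then have "ps ! (?n - Suc k) \<in> successors (ps ! (?n - Suc (Suc k)))"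
      using warping_path_nth_Suc[OF path, of "?n - Suc (Suc k)"] by simp
    then show ?thesis
      using that successors_mirror warping_path_cell_bounds[OF path, of "ps ! (?n - Suc k)"]
      by (simp add: rev_nth)
  qed
  then show ?thesis
    using path by (auto simp: warping_path_iff hd_map last_map hd_rev last_rev)
qed

text \<open>The seven pairs of cells over which the first minimum in minlrpaths is taken; the
  second minimum ranges over their mirror images.\<close>

definition start_pairs :: "((nat \<times> nat) \<times> (nat \<times> nat)) set" where
  "start_pairs = {((1, 2), (1, 3)), ((1, 2), (2, 3)), ((2, 2), (2, 3)), ((2, 2), (3, 3)),
                  ((2, 2), (3, 2)), ((2, 1), (3, 2)), ((2, 1), (3, 1))}"

lemma start_pairs_cells:
  assumes "(p, q) \<in> start_pairs"
  shows "fst p \<le> 3 \<and> snd p \<le> 3 \<and> fst q \<le> 3 \<and> snd q \<le> 3 \<and> distinct [(1, 1), p, q]"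
  using assms by (auto simp: start_pairs_def)

lemma start_pairs_mirror_cells:
  assumes "(p, q) \<in> start_pairs" "4 \<le> l"
  shows "l - 2 \<le> fst (mirror l p) \<and> l - 2 \<le> snd (mirror l p) \<and> l - 2 \<le> fst (mirror l q)
    \<and> l - 2 \<le> snd (mirror l q) \<and> distinct [(l, l), mirror l p, mirror l q]"
  using assms by (auto simp: start_pairs_def)

lemma warping_path_start:
  assumes path: "warping_path l ps" and "4 \<le> l"
  shows "\<exists>(p, q)\<in>start_pairs. p \<in> set ps \<and> q \<in> set ps"
proof -
  have three_steps: "\<exists>(p, q)\<in>start_pairs. p \<in> S \<and> q \<in> S"
    if "p1 \<in> successors (1, 1)" "p2 \<in> successors p1" "p3 \<in> successors p2"
      and "p1 \<in> S" "p2 \<in> S" "p3 \<in> S" for p1 p2 p3 S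
    using that unfolding start_pairs_def by (auto simp: numeral_eq_Suc)
  have "4 \<le> length ps"
    using warping_path_length_ge[OF path] \<open>4 \<le> l\<close> by simp
  then show ?thesis
    using warping_path_nth_Suc[OF path, of 0] warping_path_nth_Suc[OF path, of 1]
      warping_path_nth_Suc[OF path, of 2] warping_path_nth_0[OF path]
    by (intro three_steps[of "ps ! 1" "ps ! 2" "ps ! 3"]) (simp_all add: numeral_eq_Suc)
qed

lemma warping_path_end:
  assumes path: "warping_path l ps" and "4 \<le> l"
  shows "\<exists>(p, q)\<in>start_pairs. mirror l p \<in> set ps \<and> mirror l q \<in> set ps"
proof -
  have "mirror l p \<in> set ps" if "p \<in> set (map (mirror l) (rev ps))" for p
    using that warping_path_cell_bounds[OF path] mirror_mirror by fastforce
  then show ?thesis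
    using warping_path_start[OF warping_path_mirror[OF path] \<open>4 \<le> l\<close>] by blast
qed

section \<open>Path costs\<close>

fun cell_cost :: "(real \<Rightarrow> real \<Rightarrow> real) \<Rightarrow> (nat \<Rightarrow> real) \<Rightarrow> (nat \<Rightarrow> real) \<Rightarrow> nat \<times> nat \<Rightarrow> real"
  where "cell_cost \<delta> A B (i, j) = \<delta> (A i) (B j)"

lemma path_cost_eq_sum_cells:
  assumes "warping_path l ps"
  shows "path_cost \<delta> A B ps = (\<Sum>p\<in>set ps. cell_cost \<delta> A B p)"
proof -
  have "(\<lambda>(i, j). \<delta> (A i) (B j)) = cell_cost \<delta> A B"
    by auto
  then show ?thesis
    unfolding path_cost_def
    by (simp add: sum_list_distinct_conv_sum_set warping_path_distinct[OF assms])
qed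

lemma finite_warping_paths: "finite {ps. warping_path l ps}"
proof (rule finite_subset)
  show "{ps. warping_path l ps} \<subseteq> {ps. set ps \<subseteq> {1..l} \<times> {1..l} \<and> distinct ps}"
    using warping_path_cell_bounds warping_path_distinct by fastforce
qed (simp add: finite_subset_distinct)

lemma diagonal_warping_path:
  assumes "1 \<le> l"
  shows "warping_path l (map (\<lambda>k. (k, k)) [1..<Suc l]) \<and> in_band w (map (\<lambda>k. (k, k)) [1..<Suc l])"
  using assms
  by (auto simp: warping_path_iff in_band_def hd_map last_map hd_upt last_upt simp del: upt_Suc)

lemma DTW_lower_bound:
  assumes "1 \<le> l" and "\<And>ps. warping_path l ps \<Longrightarrow> in_band w ps \<Longrightarrow> x \<le> path_cost \<delta> A B ps"
  shows "x \<le> DTW \<delta> l w A B"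
proof -
  let ?W = "{ps. warping_path l ps \<and> in_band w ps}"
  have "finite ?W"
    by (rule finite_subset[OF _ finite_warping_paths]) blast
  moreover have "?W \<noteq> {}"
    using diagonal_warping_path[OF \<open>1 \<le> l\<close>] by blast
  moreover have "{path_cost \<delta> A B ps |ps. warping_path l ps \<and> in_band w ps} = path_cost \<delta> A B ` ?W"
    by blast
  ultimately show ?thesis
    unfolding DTW_def using assms(2) by (auto intro!: Min.boundedI)
qed

lemma minlrpaths_eq:
  "minlrpaths \<delta> l A B = cell_cost \<delta> A B (1, 1) + cell_cost \<delta> A B (l, l)
     + Min ((\<lambda>(p, q). cell_cost \<delta> A B p + cell_cost \<delta> A B q) ` start_pairs)
     + Min ((\<lambda>(p, q). cell_cost \<delta> A B (mirror l p) + cell_cost \<delta> A B (mirror l q)) ` start_pairs)"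
proof -
  have "Suc l - 1 = l" "Suc l - 2 = l - 1" "Suc l - 3 = l - 2"
    by simp_all
  then show ?thesis
    unfolding minlrpaths_def start_pairs_def Let_def image_insert image_empty case_prod_conv
      cell_cost.simps mirror.simps
    by (simp only:)
qed

lemma corner_cost_le:
  fixes c :: "nat \<times> nat \<Rightarrow> real" and m :: "nat \<times> nat \<Rightarrow> nat \<times> nat"
  assumes "finite T" "\<And>x. 0 \<le> c x" and "(p, q) \<in> start_pairs"
    and "m (1, 1) \<in> T" "m p \<in> T" "m q \<in> T" "distinct [m (1, 1), m p, m q]"
  shows "c (m (1, 1)) + Min ((\<lambda>(p, q). c (m p) + c (m q)) ` start_pairs) \<le> sum c T"
proof -
  have "Min ((\<lambda>(p, q). c (m p) + c (m q)) ` start_pairs) \<le> c (m p) + c (m q)"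
    using assms(3) by (intro Min_le) (auto simp: start_pairs_def)
  also have "c (m (1, 1)) + (c (m p) + c (m q)) = sum c {m (1, 1), m p, m q}"
    using assms(7) by simp
  also have "\<dots> \<le> sum c T"
    by (rule sum_mono2) (use assms in auto)
  finally show ?thesis
    by simp
qed

lemma sum_le_sum_comp_of_cover:
  fixes f :: "'b \<Rightarrow> 'c::ordered_comm_monoid_add"
  assumes "finite M" "I \<subseteq> g ` M" "\<And>x. x \<in> M \<Longrightarrow> 0 \<le> f (g x)"
  shows "sum f I \<le> sum (f \<circ> g) M"
proof -
  have "sum f I \<le> sum f (g ` M)"
    by (rule sum_mono2) (use assms in auto)
  also have "\<dots> \<le> sum (f \<circ> g) M"
    by (rule sum_image_le) (use assms in auto)
  finally show ?thesis .
qed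

section \<open>Envelopes\<close>

lemma envelope_window_eq:
  "{S j |j. max 1 (i - w) \<le> j \<and> j \<le> min l (i + w)} = S ` {max 1 (i - w)..min l (i + w)}"
  by auto

lemma le_upper_env: "j \<in> {1..l} \<Longrightarrow> j \<le> i + w \<Longrightarrow> i \<le> j + w \<Longrightarrow> S j \<le> upper_env l w S i"
  unfolding upper_env_def envelope_window_eq by (rule Max_ge) auto

lemma lower_env_le: "j \<in> {1..l} \<Longrightarrow> j \<le> i + w \<Longrightarrow> i \<le> j + w \<Longrightarrow> lower_env l w S i \<le> S j"
  unfolding lower_env_def envelope_window_eq by (rule Min_le) auto

text \<open>kappa and gamma with the envelope values and the freeAbove/freeBelow tests turned into
  parameters, so that the cost estimates below are statements about reals only.\<close>

definition excess_cost :: "(real \<Rightarrow> real \<Rightarrow> real) \<Rightarrow> real \<Rightarrow> real \<Rightarrow> real \<Rightarrow> real" where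
  "excess_cost \<delta> L U a = (if a > U then \<delta> a U else if a < L then \<delta> a L else 0)"

definition gamma_cost ::
    "(real \<Rightarrow> real \<Rightarrow> real) \<Rightarrow> bool \<Rightarrow> bool \<Rightarrow> real \<Rightarrow> real \<Rightarrow> real \<Rightarrow> real \<Rightarrow> real \<Rightarrow> real" where
  "gamma_cost \<delta> fa fb UA LA ULB LUB b =
     (if fa \<and> b > UA then \<delta> b UA
      else if fb \<and> b < LA then \<delta> b LA
      else if \<not> fa \<and> b > ULB \<and> ULB > UA then \<delta> b UA - \<delta> ULB UA
      else if \<not> fb \<and> b < LUB \<and> LUB < LA then \<delta> b LA - \<delta> LUB LA
      else 0)"

lemma kappa_eq_excess_cost:
  "kappa \<delta> l w A B i = excess_cost \<delta> (lower_env l w B i) (upper_env l w B i) (A i)"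
  unfolding kappa_def excess_cost_def ..

lemma gamma_eq_gamma_cost:
  "gamma \<delta> l w A B i =
     gamma_cost \<delta> (freeAbove l w A B i) (freeBelow l w A B i) (upper_env l w A i) (lower_env l w A i)
       (upper_env l w (lower_env l w B) i) (lower_env l w (upper_env l w B) i) (B i)"
  unfolding gamma_def gamma_cost_def Let_def ..

section \<open>Pointwise estimates\<close>

text \<open>The decreasing case of the quadrangle condition in the theorem is the increasing case with
  the roles of the endpoints exchanged, so only the latter is assumed.\<close>

locale dtw_cost =
  fixes \<delta> :: "real \<Rightarrow> real \<Rightarrow> real"
  assumes nonneg: "0 \<le> \<delta> a b"
    and sym: "\<delta> a b = \<delta> b a"
    and zero: "\<delta> a a = 0"
    and quadrangle: "a \<le> x \<Longrightarrow> x \<le> y \<Longrightarrow> y \<le> b \<Longrightarrow> \<delta> a y + \<delta> b x \<le> \<delta> a b + \<delta> x y"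
begin

lemma triangle: "x \<le> y \<Longrightarrow> y \<le> z \<Longrightarrow> \<delta> x y + \<delta> y z \<le> \<delta> x z"
  using quadrangle[of x y y z] by (simp add: zero sym)

lemma mono_right: "x \<le> y \<Longrightarrow> y \<le> z \<Longrightarrow> \<delta> x y \<le> \<delta> x z"
  using triangle[of x y z] nonneg[of y z] by simp

lemma mono_left: "x \<le> y \<Longrightarrow> y \<le> z \<Longrightarrow> \<delta> y z \<le> \<delta> x z"
  using triangle[of x y z] nonneg[of x y] by simp

lemma excess_cost_nonneg: "0 \<le> excess_cost \<delta> L U a"
  unfolding excess_cost_def using nonneg by simp

lemma excess_cost_le: "L \<le> b \<Longrightarrow> b \<le> U \<Longrightarrow> excess_cost \<delta> L U a \<le> \<delta> a b"
  unfolding excess_cost_def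
  using mono_left[of b U a] mono_right[of a L b] sym[of a] nonneg[of a b] by auto

lemma gamma_cost_nonneg: "0 \<le> gamma_cost \<delta> fa fb UA LA ULB LUB b"
  unfolding gamma_cost_def using nonneg mono_right[of UA ULB b] mono_left[of b LUB LA] sym by auto

lemma gamma_cost_le: "LA \<le> a \<Longrightarrow> a \<le> UA \<Longrightarrow> gamma_cost \<delta> fa fb UA LA ULB LUB b \<le> \<delta> a b"
  unfolding gamma_cost_def
  using mono_left[of a UA b] mono_right[of b LA a] sym[of b] nonneg[of a b]
    nonneg[of ULB UA] nonneg[of LUB LA]
  by auto

lemma excess_cost_plus_above_le:
  assumes "L \<le> b" "b \<le> U" "a \<le> UA" "UA < b" and free: "a < L \<Longrightarrow> L \<le> UA"
  shows "excess_cost \<delta> L U a + \<delta> b UA \<le> \<delta> a b"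
proof (cases "a < L")
  case True
  then have excess: "excess_cost \<delta> L U a = \<delta> a L"
    using assms by (simp add: excess_cost_def)
  have "\<delta> a L + \<delta> L b \<le> \<delta> a b"
    using triangle[of a L b] True assms by linarith
  moreover have "\<delta> UA b \<le> \<delta> L b"
    using mono_left[of L UA b] free True assms by linarith
  ultimately show ?thesis
    using excess sym[of b UA] by linarith
next
  case False
  then have "excess_cost \<delta> L U a = 0"
    using assms by (simp add: excess_cost_def)
  then show ?thesis
    using mono_left[of a UA b] sym[of b UA] assms by linarith
qed

lemma excess_cost_plus_below_le:
  assumes "L \<le> b" "b \<le> U" "LA \<le> a" "b < LA" and free: "U < a \<Longrightarrow> LA \<le> U"
  shows "excess_cost \<delta> L U a + \<delta> b LA \<le> \<delta> a b"
proof (cases "U < a")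
  case True
  then have excess: "excess_cost \<delta> L U a = \<delta> a U"
    by (simp add: excess_cost_def)
  have "\<delta> b U + \<delta> U a \<le> \<delta> b a"
    using triangle[of b U a] True assms by linarith
  moreover have "\<delta> b LA \<le> \<delta> b U"
    using mono_right[of b LA U] free True assms by linarith
  ultimately show ?thesis
    using excess sym[of U a] sym[of b a] by linarith
next
  case False
  then have "excess_cost \<delta> L U a = 0"
    using assms by (simp add: excess_cost_def)
  then show ?thesis
    using mono_right[of b LA a] sym[of b a] assms by linarith
qed

lemma excess_cost_plus_above_shifted_le:
  assumes "L \<le> b" "b \<le> U" "a \<le> UA" "UA < ULB" "ULB < b" "L \<le> ULB"
  shows "excess_cost \<delta> L U a + (\<delta> b UA - \<delta> ULB UA) \<le> \<delta> a b"
proof (cases "a < L")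
  case True
  then have excess: "excess_cost \<delta> L U a = \<delta> a L"
    using assms by (simp add: excess_cost_def)
  show ?thesis
  proof (cases "UA \<le> L")
    case True
    have "\<delta> a L + \<delta> b UA \<le> \<delta> a b + \<delta> UA L"
      using quadrangle[of a UA L b] True assms by linarith
    moreover have "\<delta> UA L \<le> \<delta> UA ULB"
      using mono_right[of UA L ULB] True assms by linarith
    ultimately show ?thesis
      using excess sym[of ULB UA] by linarith
  next
    case False
    have "\<delta> a L + \<delta> L b \<le> \<delta> a b"
      using triangle[of a L b] \<open>a < L\<close> assms by linarith
    moreover have "\<delta> UA b \<le> \<delta> L b"
      using mono_left[of L UA b] False assms by linarith
    ultimately show ?thesis
      using excess nonneg[of ULB UA] sym[of b UA] by linarith
  qed
next
  case False
  then have "excess_cost \<delta> L U a = 0"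
    using assms by (simp add: excess_cost_def)
  then show ?thesis
    using mono_left[of a UA b] nonneg[of ULB UA] sym[of b UA] assms by linarith
qed

lemma excess_cost_plus_below_shifted_le:
  assumes "L \<le> b" "b \<le> U" "LA \<le> a" "LUB < LA" "b < LUB" "LUB \<le> U"
  shows "excess_cost \<delta> L U a + (\<delta> b LA - \<delta> LUB LA) \<le> \<delta> a b"
proof (cases "U < a")
  case True
  then have excess: "excess_cost \<delta> L U a = \<delta> a U"
    by (simp add: excess_cost_def)
  show ?thesis
  proof (cases "U \<le> LA")
    case True
    have "\<delta> b LA + \<delta> a U \<le> \<delta> b a + \<delta> U LA"
      using quadrangle[of b U LA a] True assms by linarith
    moreover have "\<delta> U LA \<le> \<delta> LUB LA"
      using mono_left[of LUB U LA] True assms by linarith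
    ultimately show ?thesis
      using excess sym[of b a] by linarith
  next
    case False
    have "\<delta> b U + \<delta> U a \<le> \<delta> b a"
      using triangle[of b U a] \<open>U < a\<close> assms by linarith
    moreover have "\<delta> b LA \<le> \<delta> b U"
      using mono_right[of b LA U] False assms by linarith
    ultimately show ?thesis
      using excess nonneg[of LUB LA] sym[of U a] sym[of b a] by linarith
  qed
next
  case False
  then have "excess_cost \<delta> L U a = 0"
    using assms by (simp add: excess_cost_def)
  then show ?thesis
    using mono_right[of b LA a] nonneg[of LUB LA] sym[of b a] assms by linarith
qed

text \<open>The last two hypotheses are what freeAbove and freeBelow provide.\<close>

lemma excess_cost_plus_gamma_cost_le:
  assumes "L \<le> b" "b \<le> U" "LA \<le> a" "a \<le> UA" "L \<le> ULB" "LUB \<le> U"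
    and "fa \<Longrightarrow> a < L \<Longrightarrow> L \<le> UA"
    and "fb \<Longrightarrow> U < a \<Longrightarrow> LA \<le> U"
  shows "excess_cost \<delta> L U a + gamma_cost \<delta> fa fb UA LA ULB LUB b \<le> \<delta> a b"
  unfolding gamma_cost_def
  using assms excess_cost_plus_above_le[of L b U a UA] excess_cost_plus_below_le[of L b U LA a]
    excess_cost_plus_above_shifted_le[of L b U a UA ULB]
    excess_cost_plus_below_shifted_le[of L b U LA a LUB] excess_cost_le[of L b U a]
  by (simp split: if_split)

lemma kappa_plus_gamma_le_cell_cost:
  assumes "i \<in> {1..l}" "j \<in> {1..l}" "j \<le> i + w" "i \<le> j + w"
  shows "(if i \<in> {4..l-3} then kappa \<delta> l w A B i else 0)
       + (if j \<in> {4..l-3} then gamma \<delta> l w A B j else 0) \<le> cell_cost \<delta> A B (i, j)"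
proof -
  let ?L = "lower_env l w B i" and ?U = "upper_env l w B i"
  let ?LA = "lower_env l w A j" and ?UA = "upper_env l w A j"
  have B: "?L \<le> B j" "B j \<le> ?U" and A: "?LA \<le> A i" "A i \<le> ?UA"
    using assms by (simp_all add: lower_env_le le_upper_env)
  have kappa: "kappa \<delta> l w A B i \<le> \<delta> (A i) (B j)"
    using excess_cost_le[OF B] by (simp add: kappa_eq_excess_cost)
  have gamma: "gamma \<delta> l w A B j \<le> \<delta> (A i) (B j)"
    using gamma_cost_le[OF A] by (simp add: gamma_eq_gamma_cost)
  have both: "kappa \<delta> l w A B i + gamma \<delta> l w A B j \<le> \<delta> (A i) (B j)" if "i \<in> {4..l-3}"
  proof -
    have ULB: "?L \<le> upper_env l w (lower_env l w B) j"
      and LUB: "lower_env l w (upper_env l w B) j \<le> ?U"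
      and "lower_env l w (upper_env l w A) i \<le> ?UA" "?LA \<le> upper_env l w (lower_env l w A) i"
      using assms by (simp_all add: lower_env_le le_upper_env)
    moreover have "4 \<le> i \<and> i + 3 \<le> l"
      using that by auto
    ultimately have "freeAbove l w A B j \<Longrightarrow> A i < ?L \<Longrightarrow> ?L \<le> ?UA"
      and "freeBelow l w A B j \<Longrightarrow> ?U < A i \<Longrightarrow> ?LA \<le> ?U"
      using assms unfolding freeAbove_def freeBelow_def by force+
    with B A ULB LUB show ?thesis
      unfolding kappa_eq_excess_cost gamma_eq_gamma_cost by (rule excess_cost_plus_gamma_cost_le)
  qed
  show ?thesis
    using kappa gamma both nonneg[of "A i" "B j"] by simp
qed

lemma sum_kappa_gamma_le_middle_cost:
  assumes path: "warping_path l ps" and band: "in_band w ps"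
  shows "(\<Sum>i = 4..l-3. kappa \<delta> l w A B i) + (\<Sum>j = 4..l-3. gamma \<delta> l w A B j)
       \<le> (\<Sum>p\<in>{p \<in> set ps. fst p \<in> {4..l-3} \<or> snd p \<in> {4..l-3}}. cell_cost \<delta> A B p)"
    (is "_ \<le> sum _ ?M")
proof -
  let ?R = "{4..l-3}"
  define k where "k i = (if i \<in> ?R then kappa \<delta> l w A B i else 0)" for i
  define g where "g j = (if j \<in> ?R then gamma \<delta> l w A B j else 0)" for j
  have "i \<in> fst ` ?M \<and> i \<in> snd ` ?M" if "i \<in> ?R" for i
  proof -
    have "i \<in> {1..l}"
      using that by auto
    obtain p where "p \<in> set ps" "i = fst p"
      using warping_path_covers_rows[OF path \<open>i \<in> {1..l}\<close>] by (rule imageE)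
    moreover obtain q where "q \<in> set ps" "i = snd q"
      using warping_path_covers_columns[OF path \<open>i \<in> {1..l}\<close>] by (rule imageE)
    ultimately show ?thesis
      using that by (auto intro: rev_image_eqI)
  qed
  then have cover: "?R \<subseteq> fst ` ?M" "?R \<subseteq> snd ` ?M"
    by blast+
  have "0 \<le> k i" "0 \<le> g i" for i
    unfolding k_def g_def kappa_eq_excess_cost gamma_eq_gamma_cost
    by (simp_all add: excess_cost_nonneg gamma_cost_nonneg)
  then have "sum k ?R \<le> sum (k \<circ> fst) ?M" "sum g ?R \<le> sum (g \<circ> snd) ?M"
    by (intro sum_le_sum_comp_of_cover cover finite_Collect_conjI; simp)+
  moreover have "sum (k \<circ> fst) ?M + sum (g \<circ> snd) ?M \<le> sum (cell_cost \<delta> A B) ?M"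
    unfolding sum.distrib[symmetric]
  proof (rule sum_mono)
    fix p assume "p \<in> ?M"
    moreover obtain i j where "p = (i, j)"
      by fastforce
    ultimately have "i \<in> {1..l}" "j \<in> {1..l}" "j \<le> i + w" "i \<le> j + w"
      using warping_path_cell_bounds[OF path, of p] band unfolding in_band_def by auto
    then show "(k \<circ> fst) p + (g \<circ> snd) p \<le> cell_cost \<delta> A B p"
      unfolding k_def g_def \<open>p = (i, j)\<close> comp_def fst_conv snd_conv
      by (rule kappa_plus_gamma_le_cell_cost)
  qed
  moreover have "sum k ?R = (\<Sum>i = 4..l-3. kappa \<delta> l w A B i)"
    and "sum g ?R = (\<Sum>j = 4..l-3. gamma \<delta> l w A B j)"
    by (simp_all add: k_def g_def)
  ultimately show ?thesis
    by linarith
qed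

lemma LB_Webb_le_path_cost:
  assumes "6 \<le> l" and path: "warping_path l ps" and band: "in_band w ps"
  shows "LB_Webb \<delta> l w A B \<le> path_cost \<delta> A B ps"
proof -
  let ?c = "cell_cost \<delta> A B"
  define H where "H = {p \<in> set ps. fst p \<le> 3 \<and> snd p \<le> 3}"
  define T where "T = {p \<in> set ps. l - 2 \<le> fst p \<and> l - 2 \<le> snd p}"
  define M where "M = {p \<in> set ps. fst p \<in> {4..l-3} \<or> snd p \<in> {4..l-3}}"
  have c_nonneg: "0 \<le> ?c p" for p
    using nonneg by (cases p) simp
  obtain p q where "(p, q) \<in> start_pairs" "p \<in> set ps" "q \<in> set ps"
    using warping_path_start[OF path] \<open>6 \<le> l\<close> by auto
  then have head: "?c (1, 1) + Min ((\<lambda>(p, q). ?c p + ?c q) ` start_pairs) \<le> sum ?c H"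
    using corner_cost_le[of H ?c p q "\<lambda>x. x"] start_pairs_cells[of p q] c_nonneg
      warping_path_corners[OF path]
    by (simp add: H_def)
  obtain p' q' where "(p', q') \<in> start_pairs" "mirror l p' \<in> set ps" "mirror l q' \<in> set ps"
    using warping_path_end[OF path] \<open>6 \<le> l\<close> by auto
  then have tail: "?c (l, l) + Min ((\<lambda>(p, q). ?c (mirror l p) + ?c (mirror l q)) ` start_pairs)
      \<le> sum ?c T"
    using corner_cost_le[of T ?c p' q' "mirror l"] start_pairs_mirror_cells[of p' q' l] c_nonneg
      warping_path_corners[OF path] \<open>6 \<le> l\<close>
    by (simp add: T_def)
  have "finite H" "finite T" "finite M"
    by (simp_all add: H_def T_def M_def)
  moreover have "H \<inter> T = {}" "(H \<union> T) \<inter> M = {}"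
    using \<open>6 \<le> l\<close> by (auto simp: H_def T_def M_def)
  ultimately have "sum ?c H + sum ?c T + sum ?c M = sum ?c (H \<union> T \<union> M)"
    by (simp add: sum.union_disjoint)
  also have "\<dots> \<le> sum ?c (set ps)"
    by (rule sum_mono2) (auto simp: H_def T_def M_def c_nonneg)
  finally show ?thesis
    using head tail sum_kappa_gamma_le_middle_cost[OF path band, of A B]
    unfolding LB_Webb_def minlrpaths_eq path_cost_eq_sum_cells[OF path] M_def by linarith
qed

end

theorem theorem2:
  fixes \<delta> :: "real \<Rightarrow> real \<Rightarrow> real" and A B :: "nat \<Rightarrow> real" and l w :: nat
  assumes "l \<ge> 6"
    and "\<And>a b. \<delta> a b \<ge> 0"
    and "\<And>a b. \<delta> a b = \<delta> b a"
    and "\<And>a. \<delta> a a = 0"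
    and "\<And>a b x y. (a \<le> x \<and> x \<le> y \<and> y \<le> b) \<or> (a \<ge> x \<and> x \<ge> y \<and> y \<ge> b) \<Longrightarrow>
           \<delta> a b \<ge> \<delta> a y + \<delta> b x - \<delta> x y"
  shows "LB_Webb \<delta> l w A B \<le> DTW \<delta> l w A B"
proof -
  interpret dtw_cost \<delta>
  proof
    show "\<delta> a y + \<delta> b x \<le> \<delta> a b + \<delta> x y" if "a \<le> x" "x \<le> y" "y \<le> b" for a b x y
      using assms(5)[of a x y b] that by linarith
  qed (use assms(2-4) in auto)
  show ?thesis
    using \<open>l \<ge> 6\<close> by (intro DTW_lower_bound) (simp_all add: LB_Webb_le_path_cost)
qed

end
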